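(* Let $f:\mathbb{R}^n\to\mathbb{R}$ be a differentiable closed proper convex function and $x^*\in\arg\min_x f(x)$. Let $a,b,c:[0,\infty)\to[0,\infty)$, $t\mapsto a_t,b_t,c_t$, be functions that are positive on $(0,\infty)$, and let $A:[0,\infty)\to[0,\infty)$, $t\mapsto A_t$, be differentiable and positive on $(0,\infty)$, with $$A_t=a_tb_t,\qquad \dot A_t\leqslant a_t\ \ (t\geqslant0),\qquad A_0=b_0=c_0=0.$$ Let $X,Z:[0,\infty)\to\mathbb{R}^n$ be a (continuously differentiable) solution of $$\dot Z=-a_t\nabla f(X),\qquad Z=b_t\dot X+c_t\nabla f(X)+X,\qquad Z(0)=X(0)=x_0.$$ Then for every $t>0$, $$f(X(t))-f(x^* )\leqslant\frac{\|x_0-x^*\|^2}{2A_t},\qquad \inf_{0\leqslant v\leqslant t}\|\nabla f(X(v))\|^2\leqslant\frac{\|x_0-x^*\|^2}{2\int_0^t a_vc_v\,dv}.$$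
   Context: $\|\cdot\|$ is the Euclidean norm on $\mathbb{R}^n$. *)

theory Defs
  imports "HOL-Analysis.Analysis"
begin

end

theory Submission
  imports Defs "HOL-Analysis.Analysis"
begin

(* Along the flow the energy
     E t = A t (f (X t) - f xstar) + |Z t - xstar|^2 / 2
   satisfies E' <= - a c |grad f (X)|^2: the terms A (grad f (X) . dX) cancel because A = a b,
   convexity gives grad f (X) . (X - xstar) >= f (X) - f xstar, and dA <= a.
   Integrating from 0, where E 0 = |x0 - xstar|^2 / 2, bounds both A t (f (X t) - f xstar)
   and (inf |grad f (X)|^2) * (int a c) by |x0 - xstar|^2 / 2. *)

lemma integral_pos_if_pos_on_non_negligible:
  fixes g :: "'a::euclidean_space \<Rightarrow> real"
  assumes int: "g integrable_on S"
    and nonneg: "\<And>x. x \<in> S \<Longrightarrow> g x \<ge> 0"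
    and "T \<subseteq> S" and T: "\<not> negligible T"
    and pos: "\<And>x. x \<in> T \<Longrightarrow> g x > 0"
  shows "integral S g > 0"
proof (rule ccontr)
  have abs_int: "g absolutely_integrable_on S"
    using nonnegative_absolutely_integrable_1[OF int] nonneg by blast
  let ?h = "\<lambda>x. indicator S x *\<^sub>R g x"
  assume "\<not> integral S g > 0"
  with integral_nonneg[OF int] nonneg have "integral S g = 0"
    by (meson linorder_not_less order_antisym)
  then have "integral\<^sup>L lebesgue ?h = 0"
    using set_lebesgue_integral_eq_integral(2)[OF abs_int]
    by (simp add: set_lebesgue_integral_def)
  moreover have "integrable lebesgue ?h"
    using abs_int unfolding set_integrable_def .
  moreover have "AE x in lebesgue. 0 \<le> ?h x"
    by (rule AE_I2) (simp add: indicator_def nonneg)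
  ultimately have "AE x in lebesgue. ?h x = 0"
    using integral_nonneg_eq_0_iff_AE by blast
  then obtain N where "negligible N" "{x. ?h x \<noteq> 0} \<subseteq> N"
    by (auto simp: eventually_ae_filter_negligible)
  moreover have "T \<subseteq> {x. ?h x \<noteq> 0}"
    using \<open>T \<subseteq> S\<close> pos by (fastforce simp: indicator_def)
  ultimately show False
    using T negligible_subset by blast
qed

lemma convex_on_restrict_line:
  fixes f :: "'a::real_vector \<Rightarrow> real"
  assumes "convex_on UNIV f"
  shows "convex_on UNIV (\<lambda>u. f (x + u *\<^sub>R v))"
proof (rule convex_onI)
  fix w u u' :: real
  assume w: "0 < w" "w < 1"
  have "x + ((1 - w) * u + w * u') *\<^sub>R v = (1 - w) *\<^sub>R (x + u *\<^sub>R v) + w *\<^sub>R (x + u' *\<^sub>R v)"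
    by (simp add: algebra_simps)
  then show "f (x + ((1 - w) *\<^sub>R u + w *\<^sub>R u') *\<^sub>R v)
      \<le> (1 - w) * f (x + u *\<^sub>R v) + w * f (x + u' *\<^sub>R v)"
    using convex_onD[OF assms, of w "x + u *\<^sub>R v" "x + u' *\<^sub>R v"] w by simp
qed simp

lemma convex_on_imp_above_tangent_plane:
  fixes f :: "'a::real_normed_vector \<Rightarrow> real"
  assumes convex: "convex_on UNIV f" and deriv: "(f has_derivative f') (at x)"
  shows "f x + f' (y - x) \<le> f y"
proof -
  let ?line = "\<lambda>u::real. x + u *\<^sub>R (y - x)"
  have "bounded_linear f'"
    using deriv by (rule has_derivative_bounded_linear)
  then have f'_scale: "f' (u *\<^sub>R (y - x)) = f' (y - x) * u" for u
    by (simp add: linear_simps)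
  have "(?line has_derivative (\<lambda>u. u *\<^sub>R (y - x))) (at 0)"
    by (auto intro!: derivative_eq_intros)
  moreover have "(f has_derivative f') (at (?line 0))"
    using deriv by simp
  ultimately have "((f \<circ> ?line) has_derivative (f' \<circ> (\<lambda>u. u *\<^sub>R (y - x)))) (at 0)"
    by (rule diff_chain_at)
  moreover have "f' \<circ> (\<lambda>u. u *\<^sub>R (y - x)) = (\<lambda>u. f' (y - x) * u)"
    by (simp add: o_def f'_scale)
  ultimately have "((\<lambda>u. f (?line u)) has_field_derivative f' (y - x)) (at 0)"
    by (simp add: has_field_derivative_def o_def)
  then have "f (?line 1) - f (?line 0) \<ge> f' (y - x) * (1 - 0)"
    by (intro convex_on_imp_above_tangent[OF convex_on_restrict_line[OF convex]]) auto
  then show ?thesis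
    by simp
qed

locale accelerated_gradient_flow =
  fixes f :: "'n::real_inner \<Rightarrow> real" and gradf :: "'n \<Rightarrow> 'n" and xstar :: 'n
    and a b c A dA :: "real \<Rightarrow> real"
    and X Z dX :: "real \<Rightarrow> 'n"
  assumes f_convex: "convex_on UNIV f"
    and f_grad: "\<And>x. (f has_derivative (\<lambda>h. gradf x \<bullet> h)) (at x)"
    and xstar_min: "\<And>x. f xstar \<le> f x"
    and a_nonneg: "\<And>t. t \<ge> 0 \<Longrightarrow> a t \<ge> 0"
    and c_nonneg: "\<And>t. t \<ge> 0 \<Longrightarrow> c t \<ge> 0"
    and A_deriv: "\<And>t. t \<ge> 0 \<Longrightarrow> (A has_real_derivative dA t) (at t within {0..})"
    and A_eq: "\<And>t. t \<ge> 0 \<Longrightarrow> A t = a t * b t"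
    and dA_le: "\<And>t. t \<ge> 0 \<Longrightarrow> dA t \<le> a t"
    and X_deriv: "\<And>t. t \<ge> 0 \<Longrightarrow> (X has_vector_derivative dX t) (at t within {0..})"
    and Z_deriv: "\<And>t. t \<ge> 0 \<Longrightarrow>
        (Z has_vector_derivative (- (a t *\<^sub>R gradf (X t)))) (at t within {0..})"
    and Z_eq: "\<And>t. t \<ge> 0 \<Longrightarrow> Z t = b t *\<^sub>R dX t + c t *\<^sub>R gradf (X t) + X t"
begin

definition energy :: "real \<Rightarrow> real" where
  "energy t = A t * (f (X t) - f xstar) + (norm (Z t - xstar))\<^sup>2 / 2"

definition energy_deriv :: "real \<Rightarrow> real" where
  "energy_deriv t = dA t * (f (X t) - f xstar) + A t * (gradf (X t) \<bullet> dX t)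
      - a t * (gradf (X t) \<bullet> (Z t - xstar))"

lemma energy_has_vector_derivative:
  assumes "t \<ge> 0"
  shows "(energy has_vector_derivative energy_deriv t) (at t within {0..})"
proof -
  have dX: "(X has_derivative (\<lambda>h. h *\<^sub>R dX t)) (at t within {0..})"
    using X_deriv[OF assms] by (simp add: has_vector_derivative_def)
  have dZ: "(Z has_derivative (\<lambda>h. h *\<^sub>R - (a t *\<^sub>R gradf (X t)))) (at t within {0..})"
    using Z_deriv[OF assms] by (simp add: has_vector_derivative_def)
  have dA: "(A has_derivative (\<lambda>h. dA t * h)) (at t within {0..})"
    using A_deriv[OF assms] by (simp add: has_field_derivative_def)
  have dfX: "((\<lambda>s. f (X s)) has_derivative (\<lambda>h. gradf (X t) \<bullet> (h *\<^sub>R dX t))) (at t within {0..})"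
    using diff_chain_within[OF dX has_derivative_at_withinI[OF f_grad]] by (simp add: o_def)
  have "(energy has_derivative (\<lambda>h. h * energy_deriv t)) (at t within {0..})"
    unfolding energy_def[abs_def] power2_norm_eq_inner
    by (rule derivative_eq_intros dA dfX dZ | simp)+
      (simp add: energy_deriv_def fun_eq_iff algebra_simps inner_commute field_simps)
  then show ?thesis
    by (simp add: has_vector_derivative_def mult.commute)
qed

lemma energy_deriv_le:
  assumes t: "t \<ge> 0"
  shows "energy_deriv t \<le> - a t * c t * (norm (gradf (X t)))\<^sup>2"
proof -
  let ?G = "gradf (X t)" and ?gap = "f (X t) - f xstar"
  have "?gap \<le> ?G \<bullet> (X t - xstar)"
    using convex_on_imp_above_tangent_plane[OF f_convex f_grad, of "X t" xstar]
    by (simp add: inner_diff_right)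
  then have convexity: "a t * ?gap \<le> a t * (?G \<bullet> (X t - xstar))"
    using a_nonneg[OF t] by (rule mult_left_mono)
  have "dA t * ?gap \<le> a t * ?gap"
    using dA_le[OF t] xstar_min[of "X t"] by (simp add: mult_right_mono)
  moreover have "energy_deriv t
      = dA t * ?gap - a t * c t * (norm ?G)\<^sup>2 - a t * (?G \<bullet> (X t - xstar))"
    unfolding energy_deriv_def Z_eq[OF t] A_eq[OF t] power2_norm_eq_inner
    by (simp add: algebra_simps)
  ultimately show ?thesis
    using convexity by linarith
qed

lemma energy_decay:
  assumes t: "t \<ge> 0"
    and ac_int: "(\<lambda>v. a v * c v) integrable_on {0..t}"
    and m_le: "\<And>v. v \<in> {0..t} \<Longrightarrow> m \<le> (norm (gradf (X v)))\<^sup>2"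
  shows "energy t + m * integral {0..t} (\<lambda>v. a v * c v) \<le> energy 0"
proof -
  have "(energy_deriv has_integral (energy t - energy 0)) {0..t}"
    using t
    by (intro fundamental_theorem_of_calculus)
      (auto intro: has_vector_derivative_within_subset[OF energy_has_vector_derivative])
  moreover have "((\<lambda>v. - m * (a v * c v)) has_integral
      - m * integral {0..t} (\<lambda>v. a v * c v)) {0..t}"
    using ac_int by (intro has_integral_mult_right) (rule integrable_integral)
  moreover have "energy_deriv v \<le> - m * (a v * c v)" if "v \<in> {0..t}" for v
  proof -
    have "m * (a v * c v) \<le> (norm (gradf (X v)))\<^sup>2 * (a v * c v)"
      using that m_le a_nonneg c_nonneg by (intro mult_right_mono) auto
    then show ?thesis
      using energy_deriv_le[of v] that by (simp add: algebra_simps)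
  qed
  ultimately have "energy t - energy 0 \<le> - m * integral {0..t} (\<lambda>v. a v * c v)"
    by (rule has_integral_le)
  then show ?thesis
    by simp
qed

end

theorem theorem5:
  fixes f :: "'n::euclidean_space \<Rightarrow> real" and gradf :: "'n \<Rightarrow> 'n"
    and xstar x0 :: 'n
    and a b c A dA :: "real \<Rightarrow> real"
    and X Z dX :: "real \<Rightarrow> 'n"
  assumes f_convex: "convex_on UNIV f"
    and f_grad: "\<And>x. (f has_derivative (\<lambda>h. gradf x \<bullet> h)) (at x)"
    and xstar_min: "\<And>x. f xstar \<le> f x"
    and a_nonneg: "\<And>t. t \<ge> 0 \<Longrightarrow> a t \<ge> 0"
    and b_nonneg: "\<And>t. t \<ge> 0 \<Longrightarrow> b t \<ge> 0"
    and c_nonneg: "\<And>t. t \<ge> 0 \<Longrightarrow> c t \<ge> 0"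
    and A_nonneg: "\<And>t. t \<ge> 0 \<Longrightarrow> A t \<ge> 0"
    and a_pos: "\<And>t. t > 0 \<Longrightarrow> a t > 0"
    and b_pos: "\<And>t. t > 0 \<Longrightarrow> b t > 0"
    and c_pos: "\<And>t. t > 0 \<Longrightarrow> c t > 0"
    and A_pos: "\<And>t. t > 0 \<Longrightarrow> A t > 0"
    and A_deriv: "\<And>t. t \<ge> 0 \<Longrightarrow> (A has_real_derivative dA t) (at t within {0..})"
    and A_eq: "\<And>t. t \<ge> 0 \<Longrightarrow> A t = a t * b t"
    and dA_le: "\<And>t. t \<ge> 0 \<Longrightarrow> dA t \<le> a t"
    and A0: "A 0 = 0" and b0: "b 0 = 0" and c0: "c 0 = 0"
    and ac_int: "\<And>t. t \<ge> 0 \<Longrightarrow> (\<lambda>v. a v * c v) integrable_on {0..t}"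
    and X_deriv: "\<And>t. t \<ge> 0 \<Longrightarrow> (X has_vector_derivative dX t) (at t within {0..})"
    and dX_cont: "continuous_on {0..} dX"
    and Z_deriv: "\<And>t. t \<ge> 0 \<Longrightarrow>
        (Z has_vector_derivative (- (a t *\<^sub>R gradf (X t)))) (at t within {0..})"
    and Z_eq: "\<And>t. t \<ge> 0 \<Longrightarrow> Z t = b t *\<^sub>R dX t + c t *\<^sub>R gradf (X t) + X t"
    and X0: "X 0 = x0" and Z0: "Z 0 = x0"
  shows "\<forall>t>0. f (X t) - f xstar \<le> (norm (x0 - xstar))\<^sup>2 / (2 * A t)
              \<and> (INF v\<in>{0..t}. (norm (gradf (X v)))\<^sup>2)
                  \<le> (norm (x0 - xstar))\<^sup>2 / (2 * integral {0..t} (\<lambda>v. a v * c v))"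
proof (intro allI impI conjI)
  fix t :: real
  assume t: "t > 0"
  interpret accelerated_gradient_flow f gradf xstar a b c A dA X Z dX
    using assms by unfold_locales auto
  let ?m = "INF v\<in>{0..t}. (norm (gradf (X v)))\<^sup>2"
  let ?I = "integral {0..t} (\<lambda>v. a v * c v)"
  have m_le: "?m \<le> (norm (gradf (X v)))\<^sup>2" if "v \<in> {0..t}" for v
    using that by (intro cINF_lower bdd_belowI2[of _ 0]) auto
  have I_pos: "?I > 0"
    using t ac_int[of t] a_nonneg c_nonneg a_pos c_pos
    by (intro integral_pos_if_pos_on_non_negligible[where T = "{t/2..t}"])
      (use negligible_interval(1)[of "t/2" t] in auto)
  have "?m \<ge> 0"
    using t by (intro cINF_greatest) auto
  then have "?m * ?I \<ge> 0"
    using I_pos by simp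
  moreover have "A t * (f (X t) - f xstar) \<ge> 0"
    using A_pos[OF t] xstar_min[of "X t"] by simp
  moreover have "A t * (f (X t) - f xstar) + (norm (Z t - xstar))\<^sup>2 / 2 + ?m * ?I
      \<le> (norm (x0 - xstar))\<^sup>2 / 2"
    using energy_decay[OF _ ac_int m_le] t by (simp add: energy_def A0 X0 Z0)
  ultimately have "A t * (f (X t) - f xstar) \<le> (norm (x0 - xstar))\<^sup>2 / 2"
    and "?m * ?I \<le> (norm (x0 - xstar))\<^sup>2 / 2"
    using zero_le_power2[of "norm (Z t - xstar)"] by linarith+
  then show "f (X t) - f xstar \<le> (norm (x0 - xstar))\<^sup>2 / (2 * A t)"
    and "?m \<le> (norm (x0 - xstar))\<^sup>2 / (2 * ?I)"
    using A_pos[OF t] I_pos by (simp_all add: pos_le_divide_eq mult_ac)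
qed

end
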